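(* For every $N\ge 1$, the (free) Magnetic Tower of Hanoi puzzle with $N$ disks can be solved in $$S_{67}(N)=3^{N-1}+N-1$$ moves, by a solution in which disk $1$ moves once and disk $k$ moves $2\cdot 3^{k-2}+1$ times for $2\le k\le N$ (disks numbered $1,\dots,N$ from largest to smallest). Moreover $S_{67}(N)\big/\tfrac{3^N-1}{2}\to \tfrac23$ as $N\to\infty$.
   Context: Magnetic Tower of Hanoi (MToH): there are three posts and $N$ disks of distinct diameters, numbered $1$ (largest) to $N$ (smallest). Each disk has two faces, one Red and one Blue. Initially all $N$ disks are stacked on a source post $S$ in decreasing size from bottom to top, each with its Red face up. A move consists of lifting the top disk of some post, turning it upside down, and placing it on top of another post. Rules: (Size rule) a disk may never be placed on a smaller disk; (Magnet rule) a disk may never be placed so that its downward-facing side has the same color as the upward-facing side of the disk it lands on. An empty post accepts a disk in either orientation. The puzzle is solved when all $N$ disks are on a destination post $D$ (one of the two initially empty posts) in decreasing size from bottom to top. *)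

theory Defs
  imports Complex_Main
begin

text \<open>Posts are the natural numbers 0, 1, 2.  Disks are numbered 1 (largest) to N (smallest).
  A state maps each post to its stack, listed from top to bottom; each entry is
  (disk, colour of the upward face), where True = Red and False = Blue.\<close>

type_synonym mstate = "nat \<Rightarrow> (nat \<times> bool) list"
type_synonym mmove = "nat \<times> nat"

definition is_post :: "nat \<Rightarrow> bool" where
  "is_post p \<longleftrightarrow> p < 3"

definition init_state :: "nat \<Rightarrow> nat \<Rightarrow> mstate" where
  "init_state N S = (\<lambda>p. if p = S then map (\<lambda>k. (k, True)) (rev [1..<N+1]) else [])"

text \<open>If the lifted disk (d,c) has upward colour c, after flipping its downward face has
  colour c and its upward face colour \<not> c.\<close>
definition legal_move :: "mstate \<Rightarrow> mmove \<Rightarrow> bool" where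
  "legal_move s m = (case m of (p, q) \<Rightarrow>
     is_post p \<and> is_post q \<and> p \<noteq> q \<and> s p \<noteq> [] \<and>
     (case s q of [] \<Rightarrow> True
      | (d', c') # _ \<Rightarrow>
          d' < fst (hd (s p)) \<comment> \<open>size rule: lower disk is larger\<close>
          \<and> snd (hd (s p)) \<noteq> c' \<comment> \<open>magnet rule: downward face vs upward face below\<close>))"

definition apply_move :: "mstate \<Rightarrow> mmove \<Rightarrow> mstate" where
  "apply_move s m = (case m of (p, q) \<Rightarrow>
     (let (d, c) = hd (s p) in s(p := tl (s p), q := (d, \<not> c) # s q)))"

definition moved_disk :: "mstate \<Rightarrow> mmove \<Rightarrow> nat" where
  "moved_disk s m = fst (hd (s (fst m)))"

fun valid_seq :: "mstate \<Rightarrow> mmove list \<Rightarrow> bool" where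
  "valid_seq s [] = True"
| "valid_seq s (m # ms) = (legal_move s m \<and> valid_seq (apply_move s m) ms)"

fun disk_moves :: "nat \<Rightarrow> mstate \<Rightarrow> mmove list \<Rightarrow> nat" where
  "disk_moves k s [] = 0"
| "disk_moves k s (m # ms) =
     (if moved_disk s m = k then 1 else 0) + disk_moves k (apply_move s m) ms"

definition solved :: "nat \<Rightarrow> nat \<Rightarrow> mstate \<Rightarrow> bool" where
  "solved N D s \<longleftrightarrow> map fst (s D) = rev [1..<N+1] \<and> (\<forall>p. is_post p \<and> p \<noteq> D \<longrightarrow> s p = [])"

definition S67 :: "nat \<Rightarrow> nat" where
  "S67 N = 3 ^ (N - 1) + N - 1"

end

theory Submission
  imports Defs "HOL-Real_Asymp.Real_Asymp"
begin

text \<open>A tower of consecutive disks is moved by the Hanoi recursion (subtower away, largest disk,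
  subtower back), and the magnet rule only dictates which colour the spare post has to show.
  Three kinds of tower transfers result: keeping the colours (\<open>3^n - 1\<close> moves, disk \<open>j\<close> of the
  tower moving \<open>2 * 3^(j-1)\<close> times), turning the tower over (half as many), and keeping the
  colours of a tower that is alone on its post, which needs only \<open>2 * 3^(n-1)\<close> moves because the
  vacated post can take part of the tower turned over. The solution moves disks \<open>2..N\<close> to the
  spare post recursively, moves disk 1 once, and brings disks \<open>2..N\<close> back on top of it by the
  last kind of transfer, giving \<open>S(N) = S(N-1) + 1 + 2 * 3^(N-2)\<close>.\<close>

definition executes :: "mstate \<Rightarrow> mmove list \<Rightarrow> mstate \<Rightarrow> (nat \<Rightarrow> nat) \<Rightarrow> bool" where
  "executes s ms s' f \<longleftrightarrow>
     valid_seq s ms \<and> foldl apply_move s ms = s' \<and> (\<forall>k. disk_moves k s ms = f k)"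

lemma valid_seq_append:
  "valid_seq s (xs @ ys) \<longleftrightarrow> valid_seq s xs \<and> valid_seq (foldl apply_move s xs) ys"
  by (induction xs arbitrary: s) auto

lemma disk_moves_append:
  "disk_moves k s (xs @ ys) = disk_moves k s xs + disk_moves k (foldl apply_move s xs) ys"
  by (induction xs arbitrary: s) auto

lemma executes_Nil: "executes s [] s (\<lambda>_. 0)"
  by (simp add: executes_def)

lemma executes_append:
  "executes s xs s' f \<Longrightarrow> executes s' ys s'' g \<Longrightarrow> executes s (xs @ ys) s'' (\<lambda>k. f k + g k)"
  by (simp add: executes_def valid_seq_append disk_moves_append)

lemma executes_cong:
  "executes s ms s' f \<Longrightarrow> s' = t \<Longrightarrow> (\<And>k. f k = g k) \<Longrightarrow> executes s ms t g"
  by (simp add: executes_def)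

text \<open>A disk numbered above \<open>m\<close> may land on \<open>r\<close> exactly when it lands showing \<open>c\<close>: by the magnet
  rule the receiving top shows the colour of the landing disk's new upper face.\<close>

definition top_at_most :: "nat \<Rightarrow> bool \<Rightarrow> (nat \<times> bool) list \<Rightarrow> bool" where
  "top_at_most m c r \<longleftrightarrow> r = [] \<or> (fst (hd r) \<le> m \<and> snd (hd r) = c)"

lemma top_at_most_Nil [simp]: "top_at_most m c []"
  by (simp add: top_at_most_def)

lemma top_at_most_Suc [simp]: "top_at_most m c r \<Longrightarrow> top_at_most (Suc m) c r"
  by (auto simp: top_at_most_def)

lemma top_at_most_Cons_self [simp]: "top_at_most (Suc m) c ((Suc m, c) # r)"
  by (simp add: top_at_most_def)

lemma executes_move:
  assumes "p < 3" "q < 3" "p \<noteq> q" "s p = (Suc m, u) # r" "s q = rq" "top_at_most m v rq"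
    "v = (\<not> u)"
  shows "executes s [(p, q)] (s(p := r, q := (Suc m, v) # rq)) (\<lambda>k. if k = Suc m then 1 else 0)"
proof -
  have "legal_move s (p, q)"
    using assms by (cases rq) (auto simp: legal_move_def is_post_def top_at_most_def)
  moreover have "apply_move s (p, q) = s(p := r, q := (Suc m, v) # rq)"
    using assms by (simp add: apply_move_def)
  moreover have "moved_disk s (p, q) = Suc m"
    using assms by (simp add: moved_disk_def)
  ultimately show ?thesis
    by (simp add: executes_def)
qed

definition tower :: "nat \<Rightarrow> nat \<Rightarrow> bool \<Rightarrow> (nat \<times> bool) list" where
  "tower m n c = map (\<lambda>k. (k, c)) (rev [m+1..<m+n+1])"

lemma tower_0 [simp]: "tower m 0 c = []"
  by (simp add: tower_def)

lemma tower_Suc: "tower m (Suc n) c = tower (Suc m) n c @ [(Suc m, c)]"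
  by (simp add: tower_def upt_rec)

definition flip_count :: "nat \<Rightarrow> nat \<Rightarrow> nat \<Rightarrow> nat" where
  "flip_count m n k = (if k \<in> {m<..m+n} then 3 ^ (k - Suc m) else 0)"

lemma flip_count_0 [simp]: "flip_count m 0 k = 0"
  by (simp add: flip_count_def)

lemma flip_count_Suc:
  "flip_count m (Suc n) k = 3 * flip_count (Suc m) n k + (if k = Suc m then 1 else 0)"
proof (cases "Suc m < k")
  case True
  then have "k - Suc m = Suc (k - Suc (Suc m))"
    by simp
  with True show ?thesis
    by (simp add: flip_count_def)
qed (auto simp: flip_count_def)

fun keep_moves :: "nat \<Rightarrow> nat \<Rightarrow> nat \<Rightarrow> nat \<Rightarrow> mmove list" where
  "keep_moves 0 a b c = []"
| "keep_moves (Suc n) a b c =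
     keep_moves n a b c @ [(a, c)] @ keep_moves n b a c @ [(c, b)] @ keep_moves n a b c"

lemma executes_keep_moves:
  assumes "a < 3" "b < 3" "c < 3" "a \<noteq> b" "a \<noteq> c" "b \<noteq> c"
    "s a = tower m n col @ ra" "s b = rb"
    "top_at_most m col ra" "top_at_most m col rb" "top_at_most m (\<not> col) (s c)"
  shows "executes s (keep_moves n a b c) (s(a := ra, b := tower m n col @ rb))
           (\<lambda>k. 2 * flip_count m n k)"
  using assms
proof (induction n arbitrary: m s ra rb a b c)
  case 0
  then show ?case
    by (auto intro!: executes_cong[OF executes_Nil])
next
  case (Suc n)
  let ?sub = "\<lambda>k. 2 * flip_count (Suc m) n k" and ?big = "\<lambda>k. if k = Suc m then 1 else 0"
  define s1 where "s1 = s(a := (Suc m, col) # ra, b := tower (Suc m) n col @ rb)"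
  define s2 where "s2 = s1(a := ra, c := (Suc m, \<not> col) # s c)"
  define s3 where "s3 = s2(b := rb, a := tower (Suc m) n col @ ra)"
  define s4 where "s4 = s3(c := s c, b := (Suc m, col) # rb)"
  define s5 where "s5 = s4(a := ra, b := tower (Suc m) n col @ (Suc m, col) # rb)"
  have "executes s (keep_moves n a b c) s1 ?sub"
    unfolding s1_def
    by (rule Suc.IH) (use Suc.prems in \<open>auto simp: tower_Suc\<close>)
  moreover have "executes s1 [(a, c)] s2 ?big"
    unfolding s2_def
    by (rule executes_move) (use Suc.prems in \<open>auto simp: s1_def\<close>)
  moreover have "executes s2 (keep_moves n b a c) s3 ?sub"
    unfolding s3_def
    by (rule Suc.IH) (use Suc.prems in \<open>auto simp: s1_def s2_def\<close>)
  moreover have "executes s3 [(c, b)] s4 ?big"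
    unfolding s4_def
    by (rule executes_move) (use Suc.prems in \<open>auto simp: s1_def s2_def s3_def\<close>)
  moreover have "executes s4 (keep_moves n a b c) s5 ?sub"
    unfolding s5_def
    by (rule Suc.IH) (use Suc.prems in \<open>auto simp: s1_def s2_def s3_def s4_def\<close>)
  ultimately have "executes s (keep_moves (Suc n) a b c) s5
      (\<lambda>k. ?sub k + (?big k + (?sub k + (?big k + ?sub k))))"
    unfolding keep_moves.simps by (intro executes_append)
  then show ?case
    by (rule executes_cong)
      (use Suc.prems in \<open>auto simp: s1_def s2_def s3_def s4_def s5_def tower_Suc flip_count_Suc\<close>)
qed

text \<open>Both sequences move a tower onto \<open>b\<close> turning it over; they differ in the colour that
  the spare post \<open>c\<close> has to show.\<close>

fun flip_moves :: "nat \<Rightarrow> nat \<Rightarrow> nat \<Rightarrow> nat \<Rightarrow> mmove list" where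
  "flip_moves 0 a b c = []"
| "flip_moves (Suc n) a b c = flip_moves n a c b @ [(a, b)] @ keep_moves n c b a"

fun flip_moves_dual :: "nat \<Rightarrow> nat \<Rightarrow> nat \<Rightarrow> nat \<Rightarrow> mmove list" where
  "flip_moves_dual 0 a b c = []"
| "flip_moves_dual (Suc n) a b c = keep_moves n a c b @ [(a, b)] @ flip_moves_dual n c b a"

lemma executes_flip_moves:
  assumes "a < 3" "b < 3" "c < 3" "a \<noteq> b" "a \<noteq> c" "b \<noteq> c"
    "s a = tower m n col @ ra" "s b = rb"
    "top_at_most m col ra" "top_at_most m (\<not> col) rb" "top_at_most m (\<not> col) (s c)"
  shows "executes s (flip_moves n a b c) (s(a := ra, b := tower m n (\<not> col) @ rb))
           (flip_count m n)"
  using assms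
proof (induction n arbitrary: m s ra rb a b c)
  case 0
  then show ?case
    by (auto intro!: executes_cong[OF executes_Nil])
next
  case (Suc n)
  let ?big = "\<lambda>k. if k = Suc m then 1 else 0"
  define s1 where "s1 = s(a := (Suc m, col) # ra, c := tower (Suc m) n (\<not> col) @ s c)"
  define s2 where "s2 = s1(a := ra, b := (Suc m, \<not> col) # rb)"
  define s3 where "s3 = s2(c := s c, b := tower (Suc m) n (\<not> col) @ (Suc m, \<not> col) # rb)"
  have "executes s (flip_moves n a c b) s1 (flip_count (Suc m) n)"
    unfolding s1_def
    by (rule Suc.IH) (use Suc.prems in \<open>auto simp: tower_Suc\<close>)
  moreover have "executes s1 [(a, b)] s2 ?big"
    unfolding s2_def
    by (rule executes_move) (use Suc.prems in \<open>auto simp: s1_def\<close>)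
  moreover have "executes s2 (keep_moves n c b a) s3 (\<lambda>k. 2 * flip_count (Suc m) n k)"
    unfolding s3_def
    by (rule executes_keep_moves)
      (use Suc.prems in \<open>auto simp: s1_def s2_def\<close>)
  ultimately have "executes s (flip_moves (Suc n) a b c) s3
      (\<lambda>k. flip_count (Suc m) n k + (?big k + 2 * flip_count (Suc m) n k))"
    unfolding flip_moves.simps by (intro executes_append)
  then show ?case
    by (rule executes_cong)
      (use Suc.prems in \<open>auto simp: s1_def s2_def s3_def tower_Suc flip_count_Suc\<close>)
qed

lemma executes_flip_moves_dual:
  assumes "a < 3" "b < 3" "c < 3" "a \<noteq> b" "a \<noteq> c" "b \<noteq> c"
    "s a = tower m n col @ ra" "s b = rb"
    "top_at_most m col ra" "top_at_most m (\<not> col) rb" "top_at_most m col (s c)"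
  shows "executes s (flip_moves_dual n a b c) (s(a := ra, b := tower m n (\<not> col) @ rb))
           (flip_count m n)"
  using assms
proof (induction n arbitrary: m s ra rb a b c)
  case 0
  then show ?case
    by (auto intro!: executes_cong[OF executes_Nil])
next
  case (Suc n)
  let ?big = "\<lambda>k. if k = Suc m then 1 else 0"
  define s1 where "s1 = s(a := (Suc m, col) # ra, c := tower (Suc m) n col @ s c)"
  define s2 where "s2 = s1(a := ra, b := (Suc m, \<not> col) # rb)"
  define s3 where "s3 = s2(c := s c, b := tower (Suc m) n (\<not> col) @ (Suc m, \<not> col) # rb)"
  have "executes s (keep_moves n a c b) s1 (\<lambda>k. 2 * flip_count (Suc m) n k)"
    unfolding s1_def
    by (rule executes_keep_moves)
      (use Suc.prems in \<open>auto simp: tower_Suc\<close>)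
  moreover have "executes s1 [(a, b)] s2 ?big"
    unfolding s2_def
    by (rule executes_move) (use Suc.prems in \<open>auto simp: s1_def\<close>)
  moreover have "executes s2 (flip_moves_dual n c b a) s3 (flip_count (Suc m) n)"
    unfolding s3_def
    by (rule Suc.IH) (use Suc.prems in \<open>auto simp: s1_def s2_def\<close>)
  ultimately have "executes s (flip_moves_dual (Suc n) a b c) s3
      (\<lambda>k. 2 * flip_count (Suc m) n k + (?big k + flip_count (Suc m) n k))"
    unfolding flip_moves_dual.simps by (intro executes_append)
  then show ?case
    by (rule executes_cong)
      (use Suc.prems in \<open>auto simp: s1_def s2_def s3_def tower_Suc flip_count_Suc\<close>)
qed

definition fast_keep_count :: "nat \<Rightarrow> nat \<Rightarrow> nat \<Rightarrow> nat" where
  "fast_keep_count m n k =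
     (if k \<in> {m<..m+n} then (if k = Suc m then 2 else 4 * 3 ^ (k - Suc (Suc m))) else 0)"

lemma fast_keep_count_0 [simp]: "fast_keep_count m 0 k = 0"
  by (simp add: fast_keep_count_def)

lemma fast_keep_count_Suc:
  "fast_keep_count m (Suc n) k = 4 * flip_count (Suc m) n k + (if k = Suc m then 2 else 0)"
  by (auto simp: fast_keep_count_def flip_count_def)

fun fast_keep_moves :: "nat \<Rightarrow> nat \<Rightarrow> nat \<Rightarrow> nat \<Rightarrow> mmove list" where
  "fast_keep_moves 0 a b c = []"
| "fast_keep_moves (Suc n) a b c =
     keep_moves n a b c @ [(a, c)] @ flip_moves n b a c @ [(c, b)] @ flip_moves_dual n a b c"

lemma executes_fast_keep_moves:
  assumes "a < 3" "b < 3" "c < 3" "a \<noteq> b" "a \<noteq> c" "b \<noteq> c"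
    "s a = tower m n col" "s b = rb" "top_at_most m col rb" "top_at_most m (\<not> col) (s c)"
  shows "executes s (fast_keep_moves n a b c) (s(a := [], b := tower m n col @ rb))
           (fast_keep_count m n)"
proof (cases n)
  case 0
  then show ?thesis
    using assms by (auto intro!: executes_cong[OF executes_Nil])
next
  case (Suc n')
  let ?big = "\<lambda>k. if k = Suc m then 1 else 0"
  define s1 where "s1 = s(a := [(Suc m, col)], b := tower (Suc m) n' col @ rb)"
  define s2 where "s2 = s1(a := [], c := (Suc m, \<not> col) # s c)"
  define s3 where "s3 = s2(b := rb, a := tower (Suc m) n' (\<not> col) @ [])"
  define s4 where "s4 = s3(c := s c, b := (Suc m, col) # rb)"
  define s5 where "s5 = s4(a := [], b := tower (Suc m) n' (\<not> \<not> col) @ (Suc m, col) # rb)"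
  have "executes s (keep_moves n' a b c) s1 (\<lambda>k. 2 * flip_count (Suc m) n' k)"
    unfolding s1_def
    by (rule executes_keep_moves)
      (use assms Suc in \<open>auto simp: tower_Suc\<close>)
  moreover have "executes s1 [(a, c)] s2 ?big"
    unfolding s2_def
    by (rule executes_move) (use assms in \<open>auto simp: s1_def\<close>)
  moreover have "executes s2 (flip_moves n' b a c) s3 (flip_count (Suc m) n')"
    unfolding s3_def
    by (rule executes_flip_moves)
      (use assms in \<open>auto simp: s1_def s2_def\<close>)
  moreover have "executes s3 [(c, b)] s4 ?big"
    unfolding s4_def
    by (rule executes_move) (use assms in \<open>auto simp: s1_def s2_def s3_def\<close>)
  moreover have "executes s4 (flip_moves_dual n' a b c) s5 (flip_count (Suc m) n')"
    unfolding s5_def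
    by (rule executes_flip_moves_dual)
      (use assms in \<open>auto simp: s1_def s2_def s3_def s4_def\<close>)
  ultimately have "executes s (fast_keep_moves (Suc n') a b c) s5 (\<lambda>k. 2 * flip_count (Suc m) n' k
      + (?big k + (flip_count (Suc m) n' k + (?big k + flip_count (Suc m) n' k))))"
    unfolding fast_keep_moves.simps by (intro executes_append)
  then show ?thesis
    unfolding Suc
    by (rule executes_cong)
      (use assms in \<open>auto simp: s1_def s2_def s3_def s4_def s5_def tower_Suc fast_keep_count_Suc\<close>)
qed

definition solve_count :: "nat \<Rightarrow> nat \<Rightarrow> nat \<Rightarrow> nat" where
  "solve_count m n k =
     (if k \<in> {m<..m+n} then (if k = Suc m then 1 else 2 * 3 ^ (k - Suc (Suc m)) + 1) else 0)"

lemma solve_count_Suc: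
  "solve_count m (Suc n) k =
     solve_count (Suc m) n k + (if k = Suc m then 1 else 0) + fast_keep_count (Suc m) n k"
proof (cases "Suc (Suc m) < k")
  case True
  then have "k - Suc (Suc m) = Suc (k - Suc (Suc (Suc m)))"
    by simp
  with True show ?thesis
    by (simp add: solve_count_def fast_keep_count_def)
qed (auto simp: solve_count_def fast_keep_count_def)

fun solve_moves :: "nat \<Rightarrow> nat \<Rightarrow> nat \<Rightarrow> nat \<Rightarrow> mmove list" where
  "solve_moves 0 a b c = []"
| "solve_moves (Suc n) a b c = solve_moves n a c b @ [(a, b)] @ fast_keep_moves n c b a"

lemma executes_solve_moves:
  assumes "a < 3" "b < 3" "c < 3" "a \<noteq> b" "a \<noteq> c" "b \<noteq> c"
    "s a = tower m n col @ ra" "s b = []" "s c = []" "top_at_most m col ra"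
  shows "executes s (solve_moves n a b c) (s(a := ra, b := tower m n (\<not> col))) (solve_count m n)"
  using assms
proof (induction n arbitrary: m s ra a b c)
  case 0
  then show ?case
    by (auto intro!: executes_cong[OF executes_Nil] simp: solve_count_def)
next
  case (Suc n)
  let ?big = "\<lambda>k. if k = Suc m then 1 else 0"
  define s1 where "s1 = s(a := (Suc m, col) # ra, c := tower (Suc m) n (\<not> col))"
  define s2 where "s2 = s1(a := ra, b := [(Suc m, \<not> col)])"
  define s3 where "s3 = s2(c := [], b := tower (Suc m) n (\<not> col) @ [(Suc m, \<not> col)])"
  have "executes s (solve_moves n a c b) s1 (solve_count (Suc m) n)"
    unfolding s1_def
    by (rule Suc.IH) (use Suc.prems in \<open>auto simp: tower_Suc\<close>)
  moreover have "executes s1 [(a, b)] s2 ?big"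
    unfolding s2_def
    by (rule executes_move) (use Suc.prems in \<open>auto simp: s1_def\<close>)
  moreover have "executes s2 (fast_keep_moves n c b a) s3 (fast_keep_count (Suc m) n)"
    unfolding s3_def
    by (rule executes_fast_keep_moves)
      (use Suc.prems in \<open>auto simp: s1_def s2_def\<close>)
  ultimately have "executes s (solve_moves (Suc n) a b c) s3
      (\<lambda>k. solve_count (Suc m) n k + (?big k + fast_keep_count (Suc m) n k))"
    unfolding solve_moves.simps by (intro executes_append)
  then show ?case
    by (rule executes_cong)
      (use Suc.prems in \<open>auto simp: s1_def s2_def s3_def tower_Suc solve_count_Suc\<close>)
qed

lemma length_keep_moves: "length (keep_moves n a b c) + 1 = 3 ^ n"
proof (induction n arbitrary: a b c)
  case (Suc n)
  show ?case
    using Suc.IH[of a b c] Suc.IH[of b a c] unfolding power_Suc by simp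
qed simp

lemma length_flip_moves: "2 * length (flip_moves n a b c) + 1 = 3 ^ n"
proof (induction n arbitrary: a b c)
  case (Suc n)
  show ?case
    using Suc.IH[of a c b] length_keep_moves[of n c b a] unfolding power_Suc by simp
qed simp

lemma length_flip_moves_dual: "2 * length (flip_moves_dual n a b c) + 1 = 3 ^ n"
proof (induction n arbitrary: a b c)
  case (Suc n)
  show ?case
    using Suc.IH[of c b a] length_keep_moves[of n a c b] unfolding power_Suc by simp
qed simp

lemma length_fast_keep_moves: "length (fast_keep_moves (Suc n) a b c) = 2 * 3 ^ n"
  using length_keep_moves[of n a b c] length_flip_moves[of n b a c]
    length_flip_moves_dual[of n a b c]
  by simp

lemma length_solve_moves: "length (solve_moves (Suc n) a b c) = 3 ^ n + n"
proof (induction n arbitrary: a b c)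
  case (Suc n)
  have "solve_moves (Suc (Suc n)) a b c =
      solve_moves (Suc n) a c b @ [(a, b)] @ fast_keep_moves (Suc n) c b a"
    by simp
  then show ?case
    using Suc.IH[of a c b] length_fast_keep_moves[of n c b a] by simp
qed simp

lemma init_state_eq_tower: "init_state N S = (\<lambda>p. if p = S then tower 0 N True else [])"
  by (auto simp: init_state_def tower_def)

lemma S67_ratio_tendsto: "(\<lambda>N. real (S67 N) / ((3 ^ N - 1) / 2)) \<longlonglongrightarrow> 2 / 3"
proof -
  have "(\<lambda>N::nat. 2 * ((3::real) ^ N / 3 + real N - 1) / (3 ^ N - 1)) \<longlonglongrightarrow> 2 / 3"
    by real_asymp
  moreover have "\<forall>\<^sub>F N in sequentially.
      2 * ((3::real) ^ N / 3 + real N - 1) / (3 ^ N - 1) = real (S67 N) / ((3 ^ N - 1) / 2)"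
    using eventually_gt_at_top[of "0::nat"]
  proof eventually_elim
    case (elim N)
    then have "real (S67 N) = (3::real) ^ N / 3 + real N - 1"
      by (cases N) (auto simp: S67_def)
    then show ?case
      by simp
  qed
  ultimately show ?thesis
    by (rule Lim_transform_eventually)
qed

lemma magnetic_hanoi_solution:
  assumes "N \<ge> 1" "is_post S" "is_post D" "S \<noteq> D"
  shows "\<exists>ms. valid_seq (init_state N S) ms
           \<and> solved N D (foldl apply_move (init_state N S) ms)
           \<and> length ms = S67 N
           \<and> disk_moves 1 (init_state N S) ms = 1
           \<and> (\<forall>k. 2 \<le> k \<and> k \<le> N \<longrightarrow> disk_moves k (init_state N S) ms = 2 * 3 ^ (k - 2) + 1)"
proof -
  obtain n where N: "N = Suc n"
    using assms(1) by (auto dest: Suc_le_D)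
  have posts: "S < 3" "D < 3" "S \<noteq> D"
    using assms(2-4) by (auto simp: is_post_def)
  define I where "I = 3 - S - D"
  have I: "I < 3" "I \<noteq> S" "I \<noteq> D"
    using posts unfolding I_def by arith+
  define ms where "ms = solve_moves N S D I"
  have "executes (init_state N S) ms
      ((init_state N S)(S := [], D := tower 0 N False)) (solve_count 0 N)"
    using executes_solve_moves[where col = True and ra = "[]"] posts I
    by (simp add: ms_def init_state_eq_tower)
  moreover have "length ms = S67 N"
    unfolding ms_def N length_solve_moves S67_def by simp
  ultimately show ?thesis
    using posts I assms(1)
    by (intro exI[of _ ms])
      (auto simp: executes_def solved_def init_state_eq_tower tower_def o_def solve_count_def)
qed

theorem mainTheorem2:
  shows "(\<forall>N S D. N \<ge> 1 \<and> is_post S \<and> is_post D \<and> S \<noteq> D \<longrightarrow>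
           (\<exists>ms. valid_seq (init_state N S) ms
              \<and> solved N D (foldl apply_move (init_state N S) ms)
              \<and> length ms = S67 N
              \<and> disk_moves 1 (init_state N S) ms = 1
              \<and> (\<forall>k. 2 \<le> k \<and> k \<le> N \<longrightarrow> disk_moves k (init_state N S) ms = 2 * 3 ^ (k - 2) + 1)))
       \<and> (\<lambda>N. real (S67 N) / ((3 ^ N - 1) / 2)) \<longlonglongrightarrow> 2 / 3"
  using magnetic_hanoi_solution S67_ratio_tendsto by blast

end
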